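(* Let $I=((x_1x_2)^{\omega_1},x_2x_3,x_3x_4)\subseteq S=\mathbb{K}[x_1,x_2,x_3,x_4]$ with $\omega_1\ge2$ (the edge ideal of the weighted path $x_1-x_2-x_3-x_4$ with weights $\omega_1,1,1$). Then $\operatorname{depth}(S/I^t)\ge1$ for every $t\ge2$.
   Context: $\mathbb{K}$ is a field; $\operatorname{depth}$ is the depth of a graded $S$-module. *)

theory Defs
  imports "HOL-Library.Poly_Mapping" "HOL-Library.Extended_Nat"
begin

datatype var = X1 | X2 | X3 | X4

text \<open>Polynomials over 'k in the variables x1..x4: finitely supported maps
  from monomials (exponent vectors var \<Rightarrow>0 nat) to coefficients.\<close>
type_synonym 'k poly4 = "(var \<Rightarrow>\<^sub>0 nat) \<Rightarrow>\<^sub>0 'k"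

definition Var :: "var \<Rightarrow> 'k::comm_ring_1 poly4" where
  "Var v = Poly_Mapping.single (Poly_Mapping.single v 1) 1"

definition gen_ideal :: "'a::comm_ring_1 set \<Rightarrow> 'a set" where
  "gen_ideal G = {p. \<exists>F c. finite F \<and> F \<subseteq> G \<and> p = (\<Sum>g\<in>F. c g * g)}"

definition ideal_prod :: "'a::comm_ring_1 set \<Rightarrow> 'a set \<Rightarrow> 'a set" where
  "ideal_prod I J = gen_ideal {a * b | a b. a \<in> I \<and> b \<in> J}"

fun ideal_pow :: "'a::comm_ring_1 set \<Rightarrow> nat \<Rightarrow> 'a set" where
  "ideal_pow I 0 = UNIV"
| "ideal_pow I (Suc n) = ideal_prod I (ideal_pow I n)"

definition max_ideal :: "'k::comm_ring_1 poly4 set" where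
  "max_ideal = gen_ideal (range Var)"

text \<open>A sequence fs = [f1,...,fr] of elements of m is a regular sequence on
  the module M = S/J if each f_i is a nonzerodivisor on M/(f1,...,f_{i-1})M
  and M/(f1,...,fr)M \<noteq> 0.  Note (f1..f_{i-1})(S/J) = (J + (f1..f_{i-1}))/J.\<close>
definition regular_seq :: "'k::field poly4 set \<Rightarrow> 'k poly4 list \<Rightarrow> bool" where
  "regular_seq J fs \<longleftrightarrow>
     set fs \<subseteq> max_ideal \<and>
     (\<forall>i < length fs. \<forall>g. fs ! i * g \<in> gen_ideal (J \<union> set (take i fs))
                           \<longrightarrow> g \<in> gen_ideal (J \<union> set (take i fs))) \<and>
     gen_ideal (J \<union> set fs) \<noteq> UNIV"

definition depth_quot :: "'k::field poly4 set \<Rightarrow> enat" where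
  "depth_quot J = Sup {enat (length fs) | fs. regular_seq J fs}"

end

theory Submission
  imports Defs "HOL-Library.Set_Algebras"
begin

text \<open>The power I^t is the monomial ideal of all monomials dominating some
  (x1 x2)^(\<omega>1 p) (x2 x3)^q (x3 x4)^r with p + q + r = t. We show that x1 + x4 is a
  nonzerodivisor on S/I^t; as I^t + (x1 + x4) is proper, this gives a regular sequence of length one.
  Suppose (x1 + x4) g \<in> I^t but g \<notin> I^t, and look at the monomials of g outside I^t on one line
  u + \<int>(e1 - e4). For the one, u, of largest x1-degree, the coefficient of x1 u in (x1 + x4) g cannot
  cancel, so x1 u \<in> I^t; likewise x4 v \<in> I^t for the one, v, of largest x4-degree. Along such a
  line the exponent set of I^t is closed under the componentwise minimum, and min(x1 u, x4 v)
  divides u, so u \<in> I^t after all.\<close>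

lemma gen_ideal_base: "g \<in> G \<Longrightarrow> g \<in> gen_ideal G"
  unfolding gen_ideal_def by (intro CollectI exI[of _ "{g}"] exI[of _ "\<lambda>_. 1"]) simp

lemma gen_ideal_0: "0 \<in> gen_ideal G"
  unfolding gen_ideal_def by (intro CollectI exI[of _ "{}"]) simp

lemma gen_ideal_add:
  assumes "p \<in> gen_ideal G" "q \<in> gen_ideal G"
  shows "p + q \<in> gen_ideal G"
proof -
  obtain F1 c1 where F1: "finite F1" "F1 \<subseteq> G" "p = (\<Sum>g\<in>F1. c1 g * g)"
    using assms(1) unfolding gen_ideal_def by blast
  obtain F2 c2 where F2: "finite F2" "F2 \<subseteq> G" "q = (\<Sum>g\<in>F2. c2 g * g)"
    using assms(2) unfolding gen_ideal_def by blast
  define c where "c g = (if g \<in> F1 then c1 g else 0) + (if g \<in> F2 then c2 g else 0)" for g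
  have "p = (\<Sum>g\<in>F1 \<union> F2. (if g \<in> F1 then c1 g else 0) * g)"
    unfolding F1(3) by (rule sum.mono_neutral_cong_right[symmetric]) (use F1 F2 in auto)
  moreover have "q = (\<Sum>g\<in>F1 \<union> F2. (if g \<in> F2 then c2 g else 0) * g)"
    unfolding F2(3) by (rule sum.mono_neutral_cong_right[symmetric]) (use F1 F2 in auto)
  ultimately have "p + q = (\<Sum>g\<in>F1 \<union> F2. c g * g)"
    unfolding c_def by (simp add: sum.distrib distrib_right)
  with F1 F2 show ?thesis
    unfolding gen_ideal_def by (intro CollectI exI[of _ "F1 \<union> F2"] exI[of _ c]) simp
qed

lemma gen_ideal_mult:
  assumes "p \<in> gen_ideal G"
  shows "r * p \<in> gen_ideal G"
proof -
  obtain F c where F: "finite F" "F \<subseteq> G" "p = (\<Sum>g\<in>F. c g * g)"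
    using assms unfolding gen_ideal_def by blast
  then have "r * p = (\<Sum>g\<in>F. (r * c g) * g)"
    by (simp add: sum_distrib_left mult.assoc)
  with F(1,2) show ?thesis
    unfolding gen_ideal_def by (intro CollectI exI[of _ F] exI[of _ "\<lambda>g. r * c g"]) simp
qed

lemma gen_ideal_sum:
  "finite A \<Longrightarrow> (\<And>x. x \<in> A \<Longrightarrow> f x \<in> gen_ideal G) \<Longrightarrow> sum f A \<in> gen_ideal G"
  by (induction A rule: finite_induct) (auto intro: gen_ideal_0 gen_ideal_add)

lemma gen_ideal_minimal:
  assumes "0 \<in> J" "\<And>p q. p \<in> J \<Longrightarrow> q \<in> J \<Longrightarrow> p + q \<in> J"
    and "\<And>p r. p \<in> J \<Longrightarrow> r * p \<in> J" and "G \<subseteq> J"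
  shows "gen_ideal G \<subseteq> J"
proof
  fix p assume "p \<in> gen_ideal G"
  then obtain F c where F: "finite F" "F \<subseteq> G" "p = (\<Sum>g\<in>F. c g * g)"
    unfolding gen_ideal_def by blast
  have "(\<Sum>g\<in>F. c g * g) \<in> J"
    using F(1,2) by (induction F rule: finite_induct) (use assms in auto)
  with F(3) show "p \<in> J" by simp
qed

lemma gen_ideal_subset: "G \<subseteq> gen_ideal H \<Longrightarrow> gen_ideal G \<subseteq> gen_ideal H"
  by (rule gen_ideal_minimal) (auto intro: gen_ideal_0 gen_ideal_add gen_ideal_mult)

section \<open>Monomial ideals\<close>

definition monomial :: "'m \<Rightarrow> 'm \<Rightarrow>\<^sub>0 'k::{zero,one}" where
  "monomial e = Poly_Mapping.single e 1"

text \<open>For upward closed U, the monomial ideal with exponent set U.\<close>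
definition span_monomials :: "'m set \<Rightarrow> ('m \<Rightarrow>\<^sub>0 'k::zero) set" where
  "span_monomials U = {p. Poly_Mapping.keys p \<subseteq> U}"

definition upward_closed :: "'m::plus set \<Rightarrow> bool" where
  "upward_closed U \<longleftrightarrow> (\<forall>m\<in>U. \<forall>k. m + k \<in> U)"

lemma monomial_mult: "monomial a * monomial b = (monomial (a + b) :: 'm::monoid_add \<Rightarrow>\<^sub>0 'k::semiring_1)"
  unfolding monomial_def by (simp add: mult_single)

lemma lookup_monomial_mult:
  fixes g :: "'m::cancel_comm_monoid_add \<Rightarrow>\<^sub>0 'k::semiring_1"
  shows "Poly_Mapping.lookup (monomial e * g) (e + k) = Poly_Mapping.lookup g k"
  by (simp add: lookup_mult monomial_def lookup_single when_mult)

lemma lookup_monomial_mult_eq_0: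
  fixes g :: "'m::cancel_comm_monoid_add \<Rightarrow>\<^sub>0 'k::semiring_1"
  shows "(\<And>k. m \<noteq> e + k) \<Longrightarrow> Poly_Mapping.lookup (monomial e * g) m = 0"
  by (simp add: lookup_mult monomial_def lookup_single when_mult)

lemma poly_mapping_sum_single:
  "p = (\<Sum>m\<in>Poly_Mapping.keys p. Poly_Mapping.single m (Poly_Mapping.lookup p m))"
proof (rule poly_mapping_eqI)
  fix k
  show "Poly_Mapping.lookup p k
    = Poly_Mapping.lookup (\<Sum>m\<in>Poly_Mapping.keys p. Poly_Mapping.single m (Poly_Mapping.lookup p m)) k"
    by (cases "k \<in> Poly_Mapping.keys p") (simp_all add: lookup_sum lookup_single when_def in_keys_iff)
qed

lemma upward_closed_plus_UNIV: "upward_closed (E + UNIV :: 'm::semigroup_add set)"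
  unfolding upward_closed_def
proof (intro ballI allI)
  fix m k assume "m \<in> E + UNIV"
  then obtain e j where "e \<in> E" "m = e + j"
    by (auto elim: set_plus_elim)
  then have "m + k = e + (j + k)"
    by (simp add: add.assoc)
  with \<open>e \<in> E\<close> show "m + k \<in> E + UNIV"
    by auto
qed

lemma span_monomials_mult:
  fixes p r :: "'m::comm_monoid_add \<Rightarrow>\<^sub>0 'k::comm_semiring_0"
  assumes "upward_closed U" "p \<in> span_monomials U"
  shows "r * p \<in> span_monomials U"
proof -
  have "a + b \<in> U" if "b \<in> Poly_Mapping.keys p" for a b
  proof -
    have "b + a \<in> U"
      using that assms unfolding span_monomials_def upward_closed_def by blast
    then show ?thesis
      by (simp add: add.commute)
  qed
  with keys_mult[of r p] show ?thesis
    unfolding span_monomials_def by blast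
qed

lemma gen_ideal_subset_span_monomials:
  "upward_closed U \<Longrightarrow> G \<subseteq> span_monomials U \<Longrightarrow> gen_ideal G \<subseteq> span_monomials U"
proof (rule gen_ideal_minimal)
  show "0 \<in> span_monomials U"
    "\<And>p q. p \<in> span_monomials U \<Longrightarrow> q \<in> span_monomials U \<Longrightarrow> p + q \<in> span_monomials U"
    unfolding span_monomials_def by (auto dest: subsetD[OF keys_add])
qed (use span_monomials_mult in auto)

lemma gen_ideal_span_monomials: "upward_closed U \<Longrightarrow> gen_ideal (span_monomials U) = span_monomials U"
  using gen_ideal_subset_span_monomials[of U "span_monomials U"] gen_ideal_base by blast

lemma monomial_in_span_monomials:
  "e \<in> E \<Longrightarrow> (monomial e :: 'm::monoid_add \<Rightarrow>\<^sub>0 'k::zero_neq_one) \<in> span_monomials (E + UNIV)"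
  unfolding span_monomials_def monomial_def set_plus_def by (auto intro: add_0_right[symmetric])

lemma gen_ideal_monomials:
  "gen_ideal (monomial ` E) = (span_monomials (E + UNIV) :: ('m::comm_monoid_add \<Rightarrow>\<^sub>0 'k::comm_ring_1) set)"
proof
  show "gen_ideal (monomial ` E) \<subseteq> (span_monomials (E + UNIV) :: ('m \<Rightarrow>\<^sub>0 'k) set)"
    by (intro gen_ideal_subset_span_monomials upward_closed_plus_UNIV)
      (auto intro: monomial_in_span_monomials)
next
  show "span_monomials (E + UNIV) \<subseteq> (gen_ideal (monomial ` E) :: ('m \<Rightarrow>\<^sub>0 'k) set)"
  proof
    fix p :: "'m \<Rightarrow>\<^sub>0 'k" assume p: "p \<in> span_monomials (E + UNIV)"
    have "Poly_Mapping.single m (Poly_Mapping.lookup p m) \<in> gen_ideal (monomial ` E)"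
      if m: "m \<in> Poly_Mapping.keys p" for m
    proof -
      obtain e k where "e \<in> E" "m = e + k"
        using p m unfolding span_monomials_def set_plus_def by blast
      then have "Poly_Mapping.single m (Poly_Mapping.lookup p m)
          = Poly_Mapping.single k (Poly_Mapping.lookup p m) * monomial e"
        "monomial e \<in> gen_ideal (monomial ` E)"
        by (auto simp: monomial_def mult_single add.commute intro: gen_ideal_base)
      then show ?thesis by (metis gen_ideal_mult)
    qed
    then have "(\<Sum>m\<in>Poly_Mapping.keys p. Poly_Mapping.single m (Poly_Mapping.lookup p m))
        \<in> gen_ideal (monomial ` E)"
      by (intro gen_ideal_sum) simp_all
    then show "p \<in> gen_ideal (monomial ` E)"
      using poly_mapping_sum_single[of p] by simp
  qed
qed

lemma ideal_prod_span_monomials: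
  "ideal_prod (span_monomials (X + UNIV)) (span_monomials (Y + UNIV))
     = (span_monomials (X + Y + UNIV) :: ('m::comm_monoid_add \<Rightarrow>\<^sub>0 'k::comm_ring_1) set)"
proof
  show "ideal_prod (span_monomials (X + UNIV)) (span_monomials (Y + UNIV))
      \<subseteq> (span_monomials (X + Y + UNIV) :: ('m \<Rightarrow>\<^sub>0 'k) set)"
    unfolding ideal_prod_def
  proof (intro gen_ideal_subset_span_monomials upward_closed_plus_UNIV, safe)
    fix a b :: "'m \<Rightarrow>\<^sub>0 'k"
    assume a: "a \<in> span_monomials (X + UNIV)" and b: "b \<in> span_monomials (Y + UNIV)"
    have "u + v \<in> X + Y + UNIV" if uv: "u \<in> Poly_Mapping.keys a" "v \<in> Poly_Mapping.keys b" for u v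
    proof -
      obtain x k y l where "x \<in> X" "u = x + k" "y \<in> Y" "v = y + l"
        using a b uv unfolding span_monomials_def by (blast elim: set_plus_elim)
      then have "x + y \<in> X + Y" "u + v = (x + y) + (k + l)"
        by (auto simp: add_ac)
      then show ?thesis
        by auto
    qed
    with keys_mult[of a b] show "a * b \<in> span_monomials (X + Y + UNIV)"
      unfolding span_monomials_def by blast
  qed
next
  have "monomial z \<in> ideal_prod (span_monomials (X + UNIV)) (span_monomials (Y + UNIV))"
    if z: "z \<in> X + Y" for z :: 'm
  proof -
    obtain x y where "x \<in> X" "y \<in> Y" "z = x + y"
      using z by (auto elim: set_plus_elim)
    then show ?thesis
      unfolding ideal_prod_def
      by (intro gen_ideal_base) (auto simp: monomial_mult[symmetric] intro!: monomial_in_span_monomials)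
  qed
  then show "(span_monomials (X + Y + UNIV) :: ('m \<Rightarrow>\<^sub>0 'k) set)
      \<subseteq> ideal_prod (span_monomials (X + UNIV)) (span_monomials (Y + UNIV))"
    unfolding gen_ideal_monomials[symmetric] ideal_prod_def by (intro gen_ideal_subset) auto
qed

lemma gen_ideal_ne_UNIV_if_no_constant_term:
  assumes "G \<subseteq> span_monomials (- {0 :: 'v \<Rightarrow>\<^sub>0 nat})"
  shows "gen_ideal G \<noteq> (UNIV :: (('v \<Rightarrow>\<^sub>0 nat) \<Rightarrow>\<^sub>0 'k::comm_ring_1) set)"
proof -
  have "upward_closed (- {0 :: 'v \<Rightarrow>\<^sub>0 nat})"
    unfolding upward_closed_def by (auto simp: poly_mapping_eq_iff plus_poly_mapping.rep_eq fun_eq_iff)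
  then have "gen_ideal G \<subseteq> span_monomials (- {0})"
    using assms by (rule gen_ideal_subset_span_monomials)
  moreover have "(1 :: ('v \<Rightarrow>\<^sub>0 nat) \<Rightarrow>\<^sub>0 'k) \<notin> span_monomials (- {0})"
    by (simp add: span_monomials_def)
  ultimately show ?thesis by blast
qed

section \<open>Sums of two variables as nonzerodivisors\<close>

abbreviation deg :: "('v \<Rightarrow>\<^sub>0 nat) \<Rightarrow> 'v \<Rightarrow> nat" where
  "deg m v \<equiv> Poly_Mapping.lookup m v"

definition same_line :: "'v \<Rightarrow> 'v \<Rightarrow> ('v \<Rightarrow>\<^sub>0 nat) \<Rightarrow> ('v \<Rightarrow>\<^sub>0 nat) \<Rightarrow> bool" where
  "same_line x y u v \<longleftrightarrow>
     (\<forall>z. z \<noteq> x \<longrightarrow> z \<noteq> y \<longrightarrow> deg u z = deg v z) \<and> deg u x + deg u y = deg v x + deg v y"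

definition exchange_closed :: "'v \<Rightarrow> 'v \<Rightarrow> ('v \<Rightarrow>\<^sub>0 nat) set \<Rightarrow> bool" where
  "exchange_closed x y U \<longleftrightarrow>
     (\<forall>u v. u + Poly_Mapping.single x 1 \<in> U \<longrightarrow> v + Poly_Mapping.single y 1 \<in> U
        \<longrightarrow> same_line x y u v \<longrightarrow> deg v x \<le> deg u x \<longrightarrow> u \<in> U)"

lemma same_line_commute: "same_line y x u v = same_line x y u v"
  unfolding same_line_def by auto

lemma lookup_times_sum_of_variables:
  fixes g :: "('v \<Rightarrow>\<^sub>0 nat) \<Rightarrow>\<^sub>0 'k::comm_ring_1"
  shows "Poly_Mapping.lookup ((monomial (Poly_Mapping.single x 1) + monomial (Poly_Mapping.single y 1)) * g) m
    = Poly_Mapping.lookup (monomial (Poly_Mapping.single x 1) * g) m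
      + Poly_Mapping.lookup (monomial (Poly_Mapping.single y 1) * g) m"
  by (simp add: distrib_right lookup_add)

text \<open>Let u be a monomial of g outside U with largest x-degree on its line. The coefficient of
  x u in (x + y) g can only be cancelled by that of a monomial y-shifted from u, which lies
  further up the line, hence in U.\<close>
lemma times_var_mem_if_top_of_line:
  fixes g :: "('v \<Rightarrow>\<^sub>0 nat) \<Rightarrow>\<^sub>0 'k::comm_ring_1"
  assumes "x \<noteq> y" and U: "upward_closed U"
    and fg: "(monomial (Poly_Mapping.single x 1) + monomial (Poly_Mapping.single y 1)) * g
      \<in> span_monomials U"
    and u: "u \<in> Poly_Mapping.keys g" "u \<notin> U"
    and top: "\<And>u'. u' \<in> Poly_Mapping.keys g \<Longrightarrow> u' \<notin> U \<Longrightarrow> same_line x y u' u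
      \<Longrightarrow> deg u' x \<le> deg u x"
  shows "u + Poly_Mapping.single x 1 \<in> U"
proof (rule ccontr)
  let ?ex = "Poly_Mapping.single x 1" and ?ey = "Poly_Mapping.single y 1"
  assume "u + ?ex \<notin> U"
  then have "Poly_Mapping.lookup (monomial ?ex * g) (?ex + u)
      + Poly_Mapping.lookup (monomial ?ey * g) (?ex + u) = 0"
    using fg unfolding span_monomials_def lookup_times_sum_of_variables[symmetric]
    by (auto simp: in_keys_iff add.commute)
  moreover have "Poly_Mapping.lookup (monomial ?ex * g) (?ex + u) \<noteq> 0"
    using u(1) by (simp add: lookup_monomial_mult in_keys_iff)
  ultimately have ey_coeff: "Poly_Mapping.lookup (monomial ?ey * g) (?ex + u) \<noteq> 0"
    by (simp add: add_eq_0_iff)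
  then obtain u' where u': "?ex + u = ?ey + u'"
    using lookup_monomial_mult_eq_0 by blast
  with ey_coeff have "u' \<in> Poly_Mapping.keys g"
    by (simp add: lookup_monomial_mult in_keys_iff)
  moreover have "u' \<notin> U"
  proof
    assume "u' \<in> U"
    with U have "u' + ?ey \<in> U"
      unfolding upward_closed_def by blast
    with u' \<open>u + ?ex \<notin> U\<close> show False
      by (simp add: add.commute)
  qed
  moreover have deg_u': "deg u' z + (if z = y then 1 else 0) = deg u z + (if z = x then 1 else 0)" for z
    using arg_cong[OF u', of "\<lambda>m. deg m z"]
    by (auto simp: lookup_add lookup_single when_def split: if_splits)
  then have "deg u' z = deg u z" if "z \<noteq> x" "z \<noteq> y" for z
    using deg_u'[of z] that by simp
  with deg_u'[of x] deg_u'[of y] \<open>x \<noteq> y\<close> have "same_line x y u' u"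
    unfolding same_line_def by simp
  ultimately have "deg u' x \<le> deg u x"
    by (rule top)
  with deg_u'[of x] \<open>x \<noteq> y\<close> show False
    by simp
qed

lemma sum_of_variables_nonzerodivisor:
  fixes g :: "('v \<Rightarrow>\<^sub>0 nat) \<Rightarrow>\<^sub>0 'k::comm_ring_1"
  assumes "x \<noteq> y" "upward_closed U" "exchange_closed x y U"
    and fg: "(monomial (Poly_Mapping.single x 1) + monomial (Poly_Mapping.single y 1)) * g
      \<in> span_monomials U"
  shows "g \<in> span_monomials U"
proof (rule ccontr)
  assume "g \<notin> span_monomials U"
  then obtain u0 where "u0 \<in> Poly_Mapping.keys g" "u0 \<notin> U"
    unfolding span_monomials_def by blast
  define P where "P u \<longleftrightarrow> u \<in> Poly_Mapping.keys g \<and> u \<notin> U \<and> same_line x y u u0" for u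
  have "P u0"
    using \<open>u0 \<in> Poly_Mapping.keys g\<close> \<open>u0 \<notin> U\<close> unfolding P_def same_line_def by simp
  have bounded: "deg u x < deg u0 x + deg u0 y + 1" "deg u y < deg u0 x + deg u0 y + 1" if "P u" for u
    using that unfolding P_def same_line_def by linarith+
  have line_trans: "same_line x y u' u0" if "same_line x y u' u" "P u" for u u'
    using that unfolding P_def same_line_def by auto
  have "\<exists>u. P u \<and> (\<forall>u'. P u' \<longrightarrow> deg u' x \<le> deg u x)"
    using \<open>P u0\<close> bounded(1) by (intro ex_has_greatest_nat[where b = "deg u0 x + deg u0 y + 1"]) auto
  then obtain u where "P u" and u_top: "\<forall>u'. P u' \<longrightarrow> deg u' x \<le> deg u x"
    by blast
  have "\<exists>v. P v \<and> (\<forall>v'. P v' \<longrightarrow> deg v' y \<le> deg v y)"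
    using \<open>P u0\<close> bounded(2) by (intro ex_has_greatest_nat[where b = "deg u0 x + deg u0 y + 1"]) auto
  then obtain v where "P v" and v_top: "\<forall>v'. P v' \<longrightarrow> deg v' y \<le> deg v y"
    by blast
  have "u + Poly_Mapping.single x 1 \<in> U"
  proof (rule times_var_mem_if_top_of_line[OF assms(1,2) fg])
    show "u \<in> Poly_Mapping.keys g" "u \<notin> U"
      using \<open>P u\<close> unfolding P_def by simp_all
    show "deg u' x \<le> deg u x"
      if "u' \<in> Poly_Mapping.keys g" "u' \<notin> U" "same_line x y u' u" for u'
      using that line_trans[OF _ \<open>P u\<close>] u_top unfolding P_def by blast
  qed
  moreover have "v + Poly_Mapping.single y 1 \<in> U"
  proof -
    have "(monomial (Poly_Mapping.single y 1) + monomial (Poly_Mapping.single x 1)) * g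
        \<in> span_monomials U"
      using fg by (simp only: add.commute)
    moreover have "deg v' y \<le> deg v y"
      if "v' \<in> Poly_Mapping.keys g" "v' \<notin> U" "same_line y x v' v" for v'
      using that line_trans[OF same_line_commute[THEN iffD1] \<open>P v\<close>] v_top
      unfolding P_def by blast
    moreover have "v \<in> Poly_Mapping.keys g" "v \<notin> U"
      using \<open>P v\<close> unfolding P_def by simp_all
    ultimately show ?thesis
      using assms(1,2) times_var_mem_if_top_of_line[of y x U g v] by blast
  qed
  moreover have "same_line x y u v"
    using \<open>P u\<close> \<open>P v\<close> unfolding P_def same_line_def by simp
  moreover have "deg v x \<le> deg u x"
    using u_top \<open>P v\<close> by simp
  ultimately have "u \<in> U"
    using \<open>exchange_closed x y U\<close> unfolding exchange_closed_def by blast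
  with \<open>P u\<close> show False
    unfolding P_def by blast
qed

section \<open>The powers of the edge ideal\<close>

definition expv :: "nat \<Rightarrow> nat \<Rightarrow> nat \<Rightarrow> nat \<Rightarrow> var \<Rightarrow>\<^sub>0 nat" where
  "expv a b c d = Poly_Mapping.single X1 a + Poly_Mapping.single X2 b
     + Poly_Mapping.single X3 c + Poly_Mapping.single X4 d"

lemma deg_expv [simp]:
  "deg (expv a b c d) X1 = a" "deg (expv a b c d) X2 = b"
  "deg (expv a b c d) X3 = c" "deg (expv a b c d) X4 = d"
  by (simp_all add: expv_def lookup_add lookup_single when_def)

lemma expv_add: "expv a b c d + expv a' b' c' d' = expv (a + a') (b + b') (c + c') (d + d')"
  by (simp add: expv_def single_add add_ac)

lemma exists_plus_expv_iff:
  "(\<exists>k. m = expv a b c d + k) \<longleftrightarrow> a \<le> deg m X1 \<and> b \<le> deg m X2 \<and> c \<le> deg m X3 \<and> d \<le> deg m X4"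
proof
  assume le: "a \<le> deg m X1 \<and> b \<le> deg m X2 \<and> c \<le> deg m X3 \<and> d \<le> deg m X4"
  have "m = expv a b c d + (m - expv a b c d)"
  proof (rule poly_mapping_eqI)
    fix v show "deg m v = deg (expv a b c d + (m - expv a b c d)) v"
      using le by (cases v) (simp_all add: lookup_add lookup_minus)
  qed
  then show "\<exists>k. m = expv a b c d + k" ..
qed (auto simp: lookup_add)

text \<open>The exponent of (x1 x2)^(w p) (x2 x3)^q (x3 x4)^r, a product of p + q + r generators of I.\<close>
definition gen_prod_exp :: "nat \<Rightarrow> nat \<Rightarrow> nat \<Rightarrow> nat \<Rightarrow> var \<Rightarrow>\<^sub>0 nat" where
  "gen_prod_exp w p q r = expv (w * p) (w * p + q) (q + r) r"

definition gen_prod_exps :: "nat \<Rightarrow> nat \<Rightarrow> (var \<Rightarrow>\<^sub>0 nat) set" where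
  "gen_prod_exps w t = {gen_prod_exp w p q r | p q r. p + q + r = t}"

lemma gen_prod_exp_add:
  "gen_prod_exp w p q r + gen_prod_exp w p' q' r' = gen_prod_exp w (p + p') (q + q') (r + r')"
  by (simp add: gen_prod_exp_def expv_add algebra_simps)

lemma gen_prod_exps_0: "gen_prod_exps w 0 = {0}"
  by (simp add: gen_prod_exps_def gen_prod_exp_def expv_def)

lemma gen_prod_exps_Suc: "gen_prod_exps w (Suc t) = gen_prod_exps w 1 + gen_prod_exps w t"
proof
  show "gen_prod_exps w (Suc t) \<subseteq> gen_prod_exps w 1 + gen_prod_exps w t"
  proof
    fix m assume "m \<in> gen_prod_exps w (Suc t)"
    then obtain p q r where pqr: "p + q + r = Suc t" "m = gen_prod_exp w p q r"
      unfolding gen_prod_exps_def by blast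
    have "\<exists>p1 q1 r1. p1 + q1 + r1 = 1 \<and> p1 \<le> p \<and> q1 \<le> q \<and> r1 \<le> r"
      using pqr(1) by presburger
    then obtain p1 q1 r1 where "p1 + q1 + r1 = 1" "p1 \<le> p" "q1 \<le> q" "r1 \<le> r"
      by blast
    with pqr have "m = gen_prod_exp w p1 q1 r1 + gen_prod_exp w (p - p1) (q - q1) (r - r1)"
      "p - p1 + (q - q1) + (r - r1) = t"
      by (simp_all add: gen_prod_exp_add)
    with \<open>p1 + q1 + r1 = 1\<close> show "m \<in> gen_prod_exps w 1 + gen_prod_exps w t"
      unfolding gen_prod_exps_def by blast
  qed
next
  show "gen_prod_exps w 1 + gen_prod_exps w t \<subseteq> gen_prod_exps w (Suc t)"
    by (auto simp: gen_prod_exps_def gen_prod_exp_add elim!: set_plus_elim) force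
qed

lemma gen_prod_exps_1: "gen_prod_exps w 1 = {expv w w 0 0, expv 0 1 1 0, expv 0 0 1 1}"
proof -
  have "gen_prod_exps w 1 = {gen_prod_exp w 1 0 0, gen_prod_exp w 0 1 0, gen_prod_exp w 0 0 1}"
  proof (intro equalityI subsetI)
    fix m assume "m \<in> gen_prod_exps w 1"
    then obtain p q r where "p + q + r = 1" "m = gen_prod_exp w p q r"
      unfolding gen_prod_exps_def by blast
    then show "m \<in> {gen_prod_exp w 1 0 0, gen_prod_exp w 0 1 0, gen_prod_exp w 0 0 1}"
      by (auto simp: add_is_1)
  next
    have "gen_prod_exp w p q r \<in> gen_prod_exps w 1" if "p + q + r = 1" for p q r
      using that unfolding gen_prod_exps_def by blast
    then show "m \<in> gen_prod_exps w 1"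
      if "m \<in> {gen_prod_exp w 1 0 0, gen_prod_exp w 0 1 0, gen_prod_exp w 0 0 1}" for m
      using that by auto
  qed
  then show ?thesis by (simp add: gen_prod_exp_def)
qed

text \<open>x1^a x2^b x3^c x4^d lies in I^t, i.e.\ is divisible by a product of t generators.\<close>
definition in_edge_power :: "nat \<Rightarrow> nat \<Rightarrow> nat \<Rightarrow> nat \<Rightarrow> nat \<Rightarrow> nat \<Rightarrow> bool" where
  "in_edge_power w t a b c d \<longleftrightarrow>
     (\<exists>p q r. p + q + r = t \<and> w * p \<le> a \<and> w * p + q \<le> b \<and> q + r \<le> c \<and> r \<le> d)"

definition edge_power_exps :: "nat \<Rightarrow> nat \<Rightarrow> (var \<Rightarrow>\<^sub>0 nat) set" where
  "edge_power_exps w t = {m. in_edge_power w t (deg m X1) (deg m X2) (deg m X3) (deg m X4)}"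

lemma gen_prod_exps_plus_UNIV: "gen_prod_exps w t + UNIV = edge_power_exps w t"
  unfolding set_plus_def gen_prod_exps_def edge_power_exps_def in_edge_power_def gen_prod_exp_def
  by (auto simp: exists_plus_expv_iff[symmetric])

lemma Var_eq_monomial: "Var v = monomial (Poly_Mapping.single v 1)"
  by (simp add: Var_def monomial_def)

lemma edge_ideal_eq_gen_prod_exps:
  "gen_ideal {(Var X1 * Var X2) ^ w, Var X2 * Var X3, Var X3 * Var X4}
     = gen_ideal (monomial ` gen_prod_exps w 1 :: 'k::comm_ring_1 poly4 set)"
proof -
  have "Var X1 * Var X2 = (monomial (expv 1 1 0 0) :: 'k poly4)"
    by (simp add: Var_eq_monomial monomial_mult expv_def)
  moreover have "(monomial 0 :: 'k poly4) = 1" "expv 0 0 0 0 = 0"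
    by (simp_all add: monomial_def expv_def)
  ultimately have "(Var X1 * Var X2) ^ w = (monomial (expv w w 0 0) :: 'k poly4)"
    by (induction w) (simp_all add: monomial_mult expv_add)
  moreover have "Var X2 * Var X3 = (monomial (expv 0 1 1 0) :: 'k poly4)"
    "Var X3 * Var X4 = (monomial (expv 0 0 1 1) :: 'k poly4)"
    by (simp_all add: Var_eq_monomial monomial_mult expv_def)
  ultimately show ?thesis
    by (simp only: gen_prod_exps_1 image_insert image_empty)
qed

lemma ideal_pow_edge_ideal:
  "ideal_pow (gen_ideal {(Var X1 * Var X2) ^ w, Var X2 * Var X3, Var X3 * Var X4}) t
     = (span_monomials (edge_power_exps w t) :: 'k::comm_ring_1 poly4 set)"
proof -
  let ?I = "gen_ideal {(Var X1 * Var X2) ^ w, Var X2 * Var X3, Var X3 * Var X4} :: 'k poly4 set"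
  have "ideal_pow ?I t = span_monomials (gen_prod_exps w t + UNIV)"
  proof (induction t)
    case 0
    show ?case by (simp add: gen_prod_exps_0 span_monomials_def)
  next
    case (Suc t)
    have "ideal_pow ?I (Suc t) = ideal_prod ?I (ideal_pow ?I t)"
      by simp
    also have "\<dots> = ideal_prod (span_monomials (gen_prod_exps w 1 + UNIV))
                                (span_monomials (gen_prod_exps w t + UNIV))"
      unfolding Suc.IH by (simp only: edge_ideal_eq_gen_prod_exps gen_ideal_monomials)
    also have "\<dots> = span_monomials (gen_prod_exps w (Suc t) + UNIV)"
      by (simp only: ideal_prod_span_monomials gen_prod_exps_Suc)
    finally show ?case .
  qed
  then show ?thesis
    by (simp only: gen_prod_exps_plus_UNIV)
qed

lemma upward_closed_edge_power_exps: "upward_closed (edge_power_exps w t)"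
  using upward_closed_plus_UNIV by (simp only: gen_prod_exps_plus_UNIV[symmetric])

lemma in_edge_power_mono:
  "in_edge_power w t a b c d \<Longrightarrow> a \<le> a' \<Longrightarrow> b \<le> b' \<Longrightarrow> c \<le> c' \<Longrightarrow> d \<le> d'
    \<Longrightarrow> in_edge_power w t a' b' c' d'"
  unfolding in_edge_power_def by (elim exE conjE, intro exI) (auto intro: le_trans)

text \<open>Of two witnesses (p1, q1, r1), (p2, q2, r2) with p1 \<le> p2, the first serves for the meet if
  r1 \<le> r2; otherwise (p1, q1 + r1 - r2, r2) does, as w p2 \<ge> w p1 + (p2 - p1).\<close>
lemma in_edge_power_meet_ordered:
  assumes "1 \<le> w" "p1 \<le> p2"
    and 1: "p1 + q1 + r1 = t" "w * p1 \<le> a1" "w * p1 + q1 \<le> b" "q1 + r1 \<le> c" "r1 \<le> d1"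
    and 2: "p2 + q2 + r2 = t" "w * p2 \<le> a2" "w * p2 + q2 \<le> b" "q2 + r2 \<le> c" "r2 \<le> d2"
  shows "in_edge_power w t (min a1 a2) b c (min d1 d2)"
proof -
  have "w * p1 \<le> w * p2"
    using assms(2) by simp
  have "w * p2 = w * p1 + w * (p2 - p1)"
    using assms(2) by (simp add: algebra_simps)
  moreover have "p2 - p1 \<le> w * (p2 - p1)"
    using assms(1) by simp
  ultimately have "w * p1 + (p2 - p1) \<le> w * p2"
    by linarith
  show ?thesis
  proof (cases "r1 \<le> r2")
    case True
    with 1 2 \<open>w * p1 \<le> w * p2\<close> show ?thesis
      unfolding in_edge_power_def by (intro exI[of _ p1] exI[of _ q1] exI[of _ r1]) linarith
  next
    case False
    with 1 2 \<open>w * p1 \<le> w * p2\<close> \<open>w * p1 + (p2 - p1) \<le> w * p2\<close> show ?thesis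
      unfolding in_edge_power_def by (intro exI[of _ p1] exI[of _ "q1 + r1 - r2"] exI[of _ r2]) linarith
  qed
qed

lemma in_edge_power_meet:
  assumes "1 \<le> w" "in_edge_power w t a1 b c d1" "in_edge_power w t a2 b c d2"
  shows "in_edge_power w t (min a1 a2) b c (min d1 d2)"
proof -
  obtain p1 q1 r1 where 1: "p1 + q1 + r1 = t" "w * p1 \<le> a1" "w * p1 + q1 \<le> b" "q1 + r1 \<le> c" "r1 \<le> d1"
    using assms(2) unfolding in_edge_power_def by blast
  obtain p2 q2 r2 where 2: "p2 + q2 + r2 = t" "w * p2 \<le> a2" "w * p2 + q2 \<le> b" "q2 + r2 \<le> c" "r2 \<le> d2"
    using assms(3) unfolding in_edge_power_def by blast
  show ?thesis
  proof (cases "p1 \<le> p2")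
    case True
    from in_edge_power_meet_ordered[OF assms(1) True 1 2] show ?thesis .
  next
    case False
    from in_edge_power_meet_ordered[OF assms(1) _ 2 1] False show ?thesis
      by (simp add: min.commute)
  qed
qed

lemma exchange_closed_edge_power_exps:
  assumes "1 \<le> w"
  shows "exchange_closed X1 X4 (edge_power_exps w t)"
  unfolding exchange_closed_def
proof (intro allI impI)
  fix u v
  assume u: "u + Poly_Mapping.single X1 1 \<in> edge_power_exps w t"
    and v: "v + Poly_Mapping.single X4 1 \<in> edge_power_exps w t"
    and "same_line X1 X4 u v" and "deg v X1 \<le> deg u X1"
  then have line: "deg v X2 = deg u X2" "deg v X3 = deg u X3" "deg u X4 \<le> deg v X4"
    unfolding same_line_def by auto
  have "in_edge_power w t (deg u X1 + 1) (deg u X2) (deg u X3) (deg u X4)"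
    using u by (simp add: edge_power_exps_def lookup_add lookup_single)
  moreover have "in_edge_power w t (deg v X1) (deg u X2) (deg u X3) (deg v X4 + 1)"
    using v line by (simp add: edge_power_exps_def lookup_add lookup_single)
  ultimately have "in_edge_power w t (min (deg u X1 + 1) (deg v X1)) (deg u X2) (deg u X3)
      (min (deg u X4) (deg v X4 + 1))"
    by (rule in_edge_power_meet[OF assms])
  moreover have "min (deg u X1 + 1) (deg v X1) = deg v X1" "min (deg u X4) (deg v X4 + 1) = deg u X4"
    using \<open>deg v X1 \<le> deg u X1\<close> line(3) by simp_all
  ultimately have "in_edge_power w t (deg v X1) (deg u X2) (deg u X3) (deg u X4)"
    by simp
  then show "u \<in> edge_power_exps w t"
    unfolding edge_power_exps_def using \<open>deg v X1 \<le> deg u X1\<close> by (auto elim: in_edge_power_mono)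
qed

lemma one_le_depth_quot:
  assumes "f \<in> max_ideal"
    and "\<And>g. f * g \<in> gen_ideal J \<Longrightarrow> g \<in> gen_ideal J"
    and "gen_ideal (insert f J) \<noteq> UNIV"
  shows "1 \<le> depth_quot J"
proof -
  have "regular_seq J [f]"
    unfolding regular_seq_def using assms by (simp add: less_Suc_eq)
  then have "enat (length [f]) \<le> depth_quot J"
    unfolding depth_quot_def by (intro Sup_upper) blast
  then show ?thesis by (simp add: one_enat_def)
qed

lemma one_le_depth_quot_if_exchange_closed:
  assumes "x \<noteq> y" "upward_closed U" "exchange_closed x y U" "0 \<notin> U"
  shows "1 \<le> depth_quot (span_monomials U :: 'k::field poly4 set)"
proof (rule one_le_depth_quot)
  show "Var x + Var y \<in> max_ideal"
    unfolding max_ideal_def by (intro gen_ideal_add gen_ideal_base) auto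
  show "g \<in> gen_ideal (span_monomials U)"
    if "(Var x + Var y) * g \<in> gen_ideal (span_monomials U)" for g
    using that sum_of_variables_nonzerodivisor[OF assms(1-3)] assms(2)
    by (simp add: gen_ideal_span_monomials Var_eq_monomial)
  have "insert (Var x + Var y) (span_monomials U) \<subseteq> span_monomials (- {0})"
    using assms(4) by (auto simp: span_monomials_def Var_def dest!: subsetD[OF keys_add])
      (metis lookup_single_eq lookup_zero Zero_not_Suc)+
  then show "gen_ideal (insert (Var x + Var y) (span_monomials U)) \<noteq> UNIV"
    by (rule gen_ideal_ne_UNIV_if_no_constant_term)
qed

theorem proposition4p13:
  fixes \<omega>\<^sub>1 t :: nat
  assumes "\<omega>\<^sub>1 \<ge> 2" and "t \<ge> 2"
  shows "1 \<le> depth_quot (ideal_pow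
           (gen_ideal {(Var X1 * Var X2) ^ \<omega>\<^sub>1, Var X2 * Var X3, Var X3 * Var X4}
              :: 'k::field poly4 set) t)"
proof -
  have "1 \<le> \<omega>\<^sub>1" "0 \<notin> edge_power_exps \<omega>\<^sub>1 t"
    using assms by (auto simp: edge_power_exps_def in_edge_power_def)
  then have "1 \<le> depth_quot (span_monomials (edge_power_exps \<omega>\<^sub>1 t) :: 'k poly4 set)"
    by (intro one_le_depth_quot_if_exchange_closed[of X1 X4] upward_closed_edge_power_exps
        exchange_closed_edge_power_exps) simp_all
  then show ?thesis
    by (simp only: ideal_pow_edge_ideal)
qed

end
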